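(* Let $d:E\to\mathbb{Z}_{>0}$ be a positive integer edge cost, $M$ a positive integer, and $e_0\in E$ an edge with $d(e_0)$ even. Define $d_1:E\to\mathbb{Z}_+$ by $d_1(e_0)=d(e_0)-1$ and $d_1(e)=d(e)$ for $e\neq e_0$. If $p\in\mathbb{G}^n$ is a minimizer of $h_{d,M}$, then there exists a minimizer $q\in\mathbb{G}^n$ of $h_{d_1,M}$ with $\|p-q\|\le 2$.
   Context: Network: simple undirected graph $(V,E)$, $V=\{1,\dots,n\}$, terminals $S=\{1,\dots,k\}\subseteq V$, $k\ge3$, no edge between two terminals, node capacities $c:V\setminus S\to\mathbb{Z}_+$. Grid: the infinite $k$-star $\mathbb{T}$ is $\mathbb{R}_+\times\{1,\dots,k\}$ with all $(0,s)$ identified to a point $0$; $(x,s)$ is also written $x$; $\mathrm{dist}((x,s),(x',s'))=|x-x'|$ if $s=s'$, $x+x'$ otherwise. $x$ is integral if $\mathrm{dist}(x,0)\in\mathbb{Z}$, proper half-integral if $2\mathrm{dist}(x,0)\in\mathbb{Z}$ but $\mathrm{dist}(x,0)\notin\mathbb{Z}$. $\mathbb{G}\subseteq\mathbb{T}\times\mathbb{R}$ is the set of $(x,y)$ with $x,y$ both integral or both proper half-integral. For $(x,y),(x',y')$ put $\|(x,y)-(x',y')\|=\mathrm{dist}(x,x')+|y-y'|$, and for $p,q\in\mathbb{G}^n$, $\|p-q\|=\max_i\|p_i-q_i\|$. Potential for $d$ and $M$: $(x,y)=((x_1,y_1),\dots,(x_n,y_n))\in\mathbb{G}^n$ with $\mathrm{dist}(x_i,x_j)-y_i-y_j\le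 2d(ij)$ for all $ij\in E$, $(x_s,y_s)=((M,s),0)$ for $s\in S$, $y_i\ge0$ and $\mathrm{dist}(0,x_i)\le M$ for all $i\in V$. $h_{d,M}(x,y)=\sum_{i\in V\setminus S}c_iy_i$ if $(x,y)$ is a potential for $d$ and $M$, and $+\infty$ otherwise. *)

theory Defs
  imports Complex_Main "HOL-Library.Extended_Real"
begin

text \<open>A point of the infinite k-star T is represented canonically as a pair (r, s) with
  r \<ge> 0 the distance to the centre 0 and s \<in> {1..k} the ray; the centre 0 (where all
  rays are identified) is represented only by (0, 1).\<close>

type_synonym star_pt = "real \<times> nat"

definition in_star :: "nat \<Rightarrow> star_pt \<Rightarrow> bool" where
  "in_star k x \<longleftrightarrow> fst x \<ge> 0 \<and> snd x \<in> {1..k} \<and> (fst x = 0 \<longrightarrow> snd x = 1)"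

definition star_dist :: "star_pt \<Rightarrow> star_pt \<Rightarrow> real" where
  "star_dist x x' = (if snd x = snd x' then \<bar>fst x - fst x'\<bar> else fst x + fst x')"

definition star_origin :: star_pt where
  "star_origin = (0, 1)"

definition integral_real :: "real \<Rightarrow> bool" where
  "integral_real t \<longleftrightarrow> t \<in> \<int>"

definition proper_half_integral_real :: "real \<Rightarrow> bool" where
  "proper_half_integral_real t \<longleftrightarrow> 2 * t \<in> \<int> \<and> t \<notin> \<int>"

type_synonym grid_pt = "star_pt \<times> real"

definition in_grid :: "nat \<Rightarrow> grid_pt \<Rightarrow> bool" where
  "in_grid k p \<longleftrightarrow> in_star k (fst p) \<and>
     ((integral_real (star_dist star_origin (fst p)) \<and> integral_real (snd p)) \<or>
      (proper_half_integral_real (star_dist star_origin (fst p)) \<and> proper_half_integral_real (snd p)))"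

definition grid_norm :: "grid_pt \<Rightarrow> grid_pt \<Rightarrow> real" where
  "grid_norm p q = star_dist (fst p) (fst q) + \<bar>snd p - snd q\<bar>"

text \<open>Elements of G^n: functions on V = {1..n}, fixed to a default value outside V.\<close>
definition grid_vec :: "nat \<Rightarrow> nat \<Rightarrow> (nat \<Rightarrow> grid_pt) \<Rightarrow> bool" where
  "grid_vec n k p \<longleftrightarrow> (\<forall>i\<in>{1..n}. in_grid k (p i)) \<and> (\<forall>i. i \<notin> {1..n} \<longrightarrow> p i = (star_origin, 0))"

definition vec_norm :: "nat \<Rightarrow> (nat \<Rightarrow> grid_pt) \<Rightarrow> (nat \<Rightarrow> grid_pt) \<Rightarrow> real" where
  "vec_norm n p q = Max ((\<lambda>i. grid_norm (p i) (q i)) ` {1..n})"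

text \<open>Potentials for d and M (graph: edges are 2-element subsets of {1..n}; terminals {1..k}).\<close>
definition is_potential ::
  "nat \<Rightarrow> nat \<Rightarrow> nat set set \<Rightarrow> (nat set \<Rightarrow> int) \<Rightarrow> int \<Rightarrow> (nat \<Rightarrow> grid_pt) \<Rightarrow> bool" where
  "is_potential n k E d M p \<longleftrightarrow>
     (\<forall>i j. {i, j} \<in> E \<longrightarrow> star_dist (fst (p i)) (fst (p j)) - snd (p i) - snd (p j) \<le> 2 * d {i, j}) \<and>
     (\<forall>s\<in>{1..k}. p s = ((real_of_int M, s), 0)) \<and>
     (\<forall>i\<in>{1..n}. snd (p i) \<ge> 0 \<and> star_dist star_origin (fst (p i)) \<le> M)"

definition h_fun ::
  "nat \<Rightarrow> nat \<Rightarrow> nat set set \<Rightarrow> (nat \<Rightarrow> int) \<Rightarrow> (nat set \<Rightarrow> int) \<Rightarrow> int \<Rightarrow> (nat \<Rightarrow> grid_pt) \<Rightarrow> ereal" where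
  "h_fun n k E c d M p =
     (if is_potential n k E d M p then ereal (\<Sum>i\<in>{1..n} - {1..k}. real_of_int (c i) * snd (p i)) else \<infinity>)"

definition is_minimizer ::
  "nat \<Rightarrow> nat \<Rightarrow> nat set set \<Rightarrow> (nat \<Rightarrow> int) \<Rightarrow> (nat set \<Rightarrow> int) \<Rightarrow> int \<Rightarrow> (nat \<Rightarrow> grid_pt) \<Rightarrow> bool" where
  "is_minimizer n k E c d M p \<longleftrightarrow> grid_vec n k p \<and>
     (\<forall>q. grid_vec n k q \<longrightarrow> h_fun n k E c d M p \<le> h_fun n k E c d M q)"

end

theory Submission
  imports Defs
begin

text \<open>
  Any two grid points lie on a common line through the centre of the star, made of two rays
  a \<noteq> b. Writing z for the signed position on that line (positive on a) and y for the height,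
  the rotated coordinates U = z + y, W = z - y identify the grid on the line with \<int> \<times> \<int>, turn
  the grid norm into the max-norm, and turn every edge constraint into linear inequalities
  between the forms W = z - y and -U = -z - y of the two endpoints.

  Let p minimize h for d and q minimize h for d1 with \<parallel>p - q\<parallel> = m \<ge> 3. Moving every
  coordinate of q that is at distance at least l from p one unit towards p, and every
  coordinate of p symmetrically towards q, preserves the edge inequalities (for p because
  d1 \<le> d; for q at e0 for l = 1 or l = m) and keeps the sum of the two costs. Since p is
  optimal, the moved q is again a minimizer for d1, and it is strictly closer to p in the
  sum of the node distances. Descending on this sum gives a minimizer within distance 2.
\<close>

section \<open>One-step approach of integers\<close>

definition approach :: "int \<Rightarrow> int \<Rightarrow> int \<Rightarrow> int" where
  "approach l x y = (if l \<le> x - y then x - 1 else if l \<le> y - x then x + 1 else x)"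

lemma approach_self: "1 \<le> l \<Longrightarrow> approach l x x = x"
  unfolding approach_def by simp

lemma approach_uminus: "1 \<le> l \<Longrightarrow> approach l (- x) (- y) = - approach l x y"
  unfolding approach_def by auto

lemma approach_add_swap: "1 \<le> l \<Longrightarrow> approach l x y + approach l y x = x + y"
  unfolding approach_def by auto

lemma approach_add_le:
  assumes "1 \<le> l" "a + b \<le> \<beta>" "a' + b' \<le> \<beta>"
  shows "approach l a a' + approach l b b' \<le> \<beta>"
  using assms unfolding approach_def by auto

lemma approach_dist:
  assumes "1 \<le> l"
  shows "\<bar>approach l x y - y\<bar> = (if l \<le> \<bar>x - y\<bar> then \<bar>x - y\<bar> - 1 else \<bar>x - y\<bar>)"
  using assms unfolding approach_def by auto

lemma approach_max_dist:
  assumes "1 \<le> l"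
  shows "max \<bar>approach l x y - y\<bar> \<bar>approach l u v - v\<bar> =
    (if l \<le> max \<bar>x - y\<bar> \<bar>u - v\<bar> then max \<bar>x - y\<bar> \<bar>u - v\<bar> - 1 else max \<bar>x - y\<bar> \<bar>u - v\<bar>)"
  using approach_dist[OF assms, of x y] approach_dist[OF assms, of u v] by (simp add: max_def)

text \<open>
  The arithmetic behind the edge e0, whose bound drops by 2: a failing unit step leaves both
  forms at most 2 below their targets, while a failing step of length m needs one form to lie
  exactly m \<ge> 3 below its target; two forms of the same point either agree or add up to at
  most 0.
\<close>

lemma approach_steps_not_both_exceed:
  fixes a b a' b' c d c' d' m \<beta> :: int
  assumes "3 \<le> m" "4 \<le> \<beta>"
    and "approach 1 a a' + approach 1 b b' > \<beta> - 2" "a + b \<le> \<beta> - 2" "a' + b' \<le> \<beta>"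
    and "approach m c c' + approach m d d' > \<beta> - 2" "c + d \<le> \<beta> - 2" "c' + d' \<le> \<beta>"
       "\<bar>c - c'\<bar> \<le> m" "\<bar>d - d'\<bar> \<le> m"
    and "(a = c \<and> a' = c') \<or> a + c \<le> 0"
    and "(b = d \<and> b' = d') \<or> b + d \<le> 0"
  shows False
  using assms unfolding approach_def by (auto split: if_splits)

section \<open>Lines through the centre and rotated coordinates\<close>

definition line_pt :: "nat \<Rightarrow> nat \<Rightarrow> real \<Rightarrow> star_pt" where
  "line_pt a b z = (if 0 < z then (z, a) else if z < 0 then (- z, b) else star_origin)"

definition line_ray :: "nat \<Rightarrow> nat \<Rightarrow> bool \<Rightarrow> nat" where
  "line_ray a b e = (if e then a else b)"

definition line_sign :: "bool \<Rightarrow> real" where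
  "line_sign e = (if e then 1 else - 1)"

lemma in_star_line_pt: "a \<in> {1..k} \<Longrightarrow> b \<in> {1..k} \<Longrightarrow> in_star k (line_pt a b z)"
  unfolding in_star_def line_pt_def star_origin_def by simp

lemma fst_line_pt: "fst (line_pt a b z) = \<bar>z\<bar>"
  unfolding line_pt_def star_origin_def by simp

lemma star_dist_origin_line_pt: "star_dist star_origin (line_pt a b z) = \<bar>z\<bar>"
  by (rule linorder_cases[of z 0]; simp add: line_pt_def star_dist_def star_origin_def)

lemma star_dist_line_pt_same: "a \<noteq> b \<Longrightarrow> star_dist (line_pt a b z) (line_pt a b z') = \<bar>z - z'\<bar>"
  by (rule linorder_cases[of z 0]; rule linorder_cases[of z' 0];
      simp add: line_pt_def star_dist_def star_origin_def)

lemma line_pt_inj: "a \<noteq> b \<Longrightarrow> line_pt a b z = line_pt a b z' \<longleftrightarrow> z = z'"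
  by (rule linorder_cases[of z 0]; rule linorder_cases[of z' 0]; simp add: line_pt_def star_origin_def)

lemma line_sign_le_star_dist_line_pt:
  assumes "line_ray a b e \<noteq> line_ray c d e'"
  shows "line_sign e * z + line_sign e' * z' \<le> star_dist (line_pt a b z) (line_pt c d z')"
  by (insert assms, rule linorder_cases[of z 0]; rule linorder_cases[of z' 0]; cases e; cases e';
      auto simp: line_pt_def star_dist_def star_origin_def line_ray_def line_sign_def)

lemma star_dist_line_pt_le_iff:
  assumes "a \<noteq> b" "c \<noteq> d"
  shows "star_dist (line_pt a b z) (line_pt c d z') \<le> t \<longleftrightarrow>
    (\<forall>e e'. line_ray a b e \<noteq> line_ray c d e' \<longrightarrow> line_sign e * z + line_sign e' * z' \<le> t)"
proof (intro iffI allI impI)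
  assume forms: "\<forall>e e'. line_ray a b e \<noteq> line_ray c d e' \<longrightarrow> line_sign e * z + line_sign e' * z' \<le> t"
  have "a \<noteq> c \<Longrightarrow> z + z' \<le> t" "a \<noteq> d \<Longrightarrow> z - z' \<le> t"
    "b \<noteq> c \<Longrightarrow> - z + z' \<le> t" "b \<noteq> d \<Longrightarrow> - z - z' \<le> t"
    using forms[rule_format, of True True] forms[rule_format, of True False]
      forms[rule_format, of False True] forms[rule_format, of False False]
    by (simp_all add: line_ray_def line_sign_def)
  with assms show "star_dist (line_pt a b z) (line_pt c d z') \<le> t"
    by (rule_tac linorder_cases[of z 0]; rule_tac linorder_cases[of z' 0];
        auto simp: line_pt_def star_dist_def star_origin_def)
qed (use line_sign_le_star_dist_line_pt order_trans in blast)

definition line_gpt :: "nat \<Rightarrow> nat \<Rightarrow> int \<Rightarrow> int \<Rightarrow> grid_pt" where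
  "line_gpt a b U W = (line_pt a b (of_int (U + W) / 2), of_int (U - W) / 2)"

text \<open>The value line_sign e * z - y at the point with rotated coordinates (U, W).\<close>

definition line_form :: "bool \<Rightarrow> int \<Rightarrow> int \<Rightarrow> int" where
  "line_form e U W = (if e then W else - U)"

definition grid_gap :: "grid_pt \<Rightarrow> grid_pt \<Rightarrow> real" where
  "grid_gap P Q = star_dist (fst P) (fst Q) - snd P - snd Q"

lemma half_of_int_in_Ints_iff: "(of_int m / 2 :: real) \<in> \<int> \<longleftrightarrow> even m"
proof
  assume "of_int m / 2 \<in> (\<int> :: real set)"
  then obtain t :: int where "of_int m / 2 = (of_int t :: real)" by (metis Ints_cases)
  then have "m = 2 * t" by linarith
  then show "even m" by simp
qed auto

lemma integral_or_half_integral_iff: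
  "(integral_real x \<and> integral_real y) \<or> (proper_half_integral_real x \<and> proper_half_integral_real y)
     \<longleftrightarrow> x + y \<in> \<int> \<and> x - y \<in> \<int>"
proof
  assume "(integral_real x \<and> integral_real y) \<or> (proper_half_integral_real x \<and> proper_half_integral_real y)"
  then show "x + y \<in> \<int> \<and> x - y \<in> \<int>"
  proof
    assume half: "proper_half_integral_real x \<and> proper_half_integral_real y"
    then obtain u v :: int where u: "x = of_int u / 2" and v: "y = of_int v / 2"
      unfolding proper_half_integral_real_def
      by (metis Ints_cases nonzero_mult_div_cancel_left zero_neq_numeral)
    have "odd u" "odd v"
      using half half_of_int_in_Ints_iff unfolding u v proper_half_integral_real_def by auto
    then have "even (u + v)" "even (u - v)" by auto
    then have ints: "of_int (u + v) / 2 \<in> (\<int> :: real set)" "of_int (u - v) / 2 \<in> (\<int> :: real set)"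
      using half_of_int_in_Ints_iff by blast+
    have "x + y = of_int (u + v) / 2" "x - y = of_int (u - v) / 2"
      unfolding u v by (simp_all add: field_simps)
    then show ?thesis by (simp only: ints)
  qed (simp add: integral_real_def)
next
  assume "x + y \<in> \<int> \<and> x - y \<in> \<int>"
  then obtain u v :: int where "x + y = of_int u" and "x - y = of_int v"
    by (metis Ints_cases)
  then have x: "x = of_int (u + v) / 2" and y: "y = of_int (u - v) / 2"
    by (simp_all add: field_simps)
  have "2 * x = of_int (u + v)" "2 * y = of_int (u - v)" unfolding x y by simp_all
  then have "2 * x \<in> \<int>" "2 * y \<in> \<int>" by (metis Ints_of_int)+
  moreover have "even (u + v) \<longleftrightarrow> even (u - v)" by presburger
  ultimately show "(integral_real x \<and> integral_real y) \<or> (proper_half_integral_real x \<and> proper_half_integral_real y)"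
    unfolding integral_real_def proper_half_integral_real_def x y half_of_int_in_Ints_iff by blast
qed

lemma in_grid_iff: "in_grid k ((r, s), y) \<longleftrightarrow> in_star k (r, s) \<and> r + y \<in> \<int> \<and> r - y \<in> \<int>"
proof -
  have "in_star k (r, s) \<Longrightarrow> star_dist star_origin (r, s) = r"
    unfolding in_star_def star_dist_def star_origin_def by auto
  then show ?thesis unfolding in_grid_def integral_or_half_integral_iff by auto
qed

lemma in_grid_line_gpt:
  assumes "a \<in> {1..k}" "b \<in> {1..k}"
  shows "in_grid k (line_gpt a b U W)"
proof -
  define z :: real where "z = of_int (U + W) / 2"
  have "\<bar>z\<bar> + of_int (U - W) / 2 \<in> \<int> \<and> \<bar>z\<bar> - of_int (U - W) / 2 \<in> \<int>"
    by (cases "0 \<le> z") (auto simp: z_def field_simps)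
  moreover obtain s where s: "line_pt a b z = (\<bar>z\<bar>, s)"
    by (metis fst_line_pt prod.collapse)
  ultimately show ?thesis
    using in_star_line_pt[OF assms, of z] unfolding line_gpt_def z_def[symmetric] s in_grid_iff by simp
qed

lemma line_gpt_eq_iff: "a \<noteq> b \<Longrightarrow> line_gpt a b U W = line_gpt a b U' W' \<longleftrightarrow> U = U' \<and> W = W'"
  unfolding line_gpt_def by (auto simp: line_pt_inj)

lemma grid_norm_line_gpt:
  assumes "a \<noteq> b"
  shows "grid_norm (line_gpt a b U W) (line_gpt a b U' W') = of_int (max \<bar>U - U'\<bar> \<bar>W - W'\<bar>)"
proof -
  define X Y :: real where "X = of_int (U - U')" and "Y = of_int (W - W')"
  have eqs: "of_int (U + W) / 2 - of_int (U' + W') / 2 = (X + Y) / 2"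
    "of_int (U - W) / 2 - of_int (U' - W') / 2 = (X - Y) / 2"
    unfolding X_def Y_def by (simp_all add: field_simps)
  have "grid_norm (line_gpt a b U W) (line_gpt a b U' W') = \<bar>(X + Y) / 2\<bar> + \<bar>(X - Y) / 2\<bar>"
    unfolding grid_norm_def line_gpt_def fst_conv snd_conv star_dist_line_pt_same[OF assms] eqs ..
  also have "\<dots> = max \<bar>X\<bar> \<bar>Y\<bar>"
    by (auto simp: abs_if max_def field_simps)
  finally show ?thesis unfolding X_def Y_def by simp
qed

lemma grid_gap_line_gpt_le_iff:
  assumes "a \<noteq> b" "c \<noteq> d"
  shows "grid_gap (line_gpt a b U W) (line_gpt c d U' W') \<le> of_int \<beta> \<longleftrightarrow>
    (\<forall>e e'. line_ray a b e \<noteq> line_ray c d e' \<longrightarrow> line_form e U W + line_form e' U' W' \<le> \<beta>)"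
proof -
  have form: "line_sign e * (of_int (U + W) / 2) - of_int (U - W) / 2 = of_int (line_form e U W)"
    for e and U W :: int
    by (cases e) (simp_all add: line_sign_def line_form_def field_simps)
  have "line_sign e * (of_int (U + W) / 2) + line_sign e' * (of_int (U' + W') / 2)
      \<le> of_int \<beta> + (of_int (U - W) / 2 + of_int (U' - W') / 2)
    \<longleftrightarrow> line_form e U W + line_form e' U' W' \<le> \<beta>" for e e'
    using form[of e U W] form[of e' U' W'] by (smt (verit) of_int_add of_int_le_iff)
  then show ?thesis
    unfolding grid_gap_def line_gpt_def fst_conv snd_conv diff_diff_eq diff_le_eq
      star_dist_line_pt_le_iff[OF assms] by presburger
qed

lemma line_gpt_eqI:
  assumes "line_pt a b z = x" "z + y = of_int U" "z - y = of_int W"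
  shows "(x, y) = line_gpt a b U W"
proof -
  have "z = of_int (U + W) / 2" "y = of_int (U - W) / 2" using assms(2,3) by (simp_all add: field_simps)
  then show ?thesis using assms(1) unfolding line_gpt_def by metis
qed

lemma common_line_gpt:
  assumes "2 \<le> k" "in_grid k ((r, s), y)" "in_grid k ((r', s'), y')"
  shows "\<exists>a b U W U' W'. a \<noteq> b \<and> a \<in> {1..k} \<and> b \<in> {1..k} \<and>
    ((r, s), y) = line_gpt a b U W \<and> ((r', s'), y') = line_gpt a b U' W'"
proof -
  have P: "in_star k (r, s)" "r + y \<in> \<int>" "r - y \<in> \<int>"
    and Q: "in_star k (r', s')" "r' + y' \<in> \<int>" "r' - y' \<in> \<int>"
    using assms(2,3) unfolding in_grid_iff by auto
  define flip where "flip \<longleftrightarrow> 0 < r' \<and> s' \<noteq> s"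
  define b where "b = (if flip then s' else if s = 1 then 2 else 1)"
  define z' where "z' = (if flip then - r' else r')"
  have b: "s \<noteq> b" "s \<in> {1..k}" "b \<in> {1..k}"
    using P(1) Q(1) assms(1) unfolding in_star_def b_def by (auto simp: flip_def)
  have "line_pt s b r = (r, s)" "line_pt s b z' = (r', s')"
    using P(1) Q(1) unfolding line_pt_def in_star_def star_origin_def z'_def b_def by (auto simp: flip_def)
  moreover have z': "z' + y' \<in> \<int>" "z' - y' \<in> \<int>"
    using Q(2,3) minus_in_Ints_iff[of "r' - y'"] minus_in_Ints_iff[of "r' + y'"] unfolding z'_def by auto
  moreover obtain U W U' W' :: int where "r + y = of_int U" "r - y = of_int W"
      "z' + y' = of_int U'" "z' - y' = of_int W'"
    using P(2,3) z' by (metis Ints_cases)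
  ultimately show ?thesis using b line_gpt_eqI by metis
qed

lemma line_form_approach:
  "1 \<le> l \<Longrightarrow> line_form e (approach l U U') (approach l W W') = approach l (line_form e U W) (line_form e U' W')"
  by (cases e) (simp_all add: line_form_def approach_uminus)

lemma line_form_pair_cases:
  "W \<le> U \<Longrightarrow> (line_form e U W = line_form e' U W \<and> line_form e U' W' = line_form e' U' W') \<or>
     line_form e U W + line_form e' U W \<le> 0"
  by (cases e; cases e') (simp_all add: line_form_def)

lemma line_form_dist: "\<bar>line_form e U W - line_form e U' W'\<bar> \<le> max \<bar>U - U'\<bar> \<bar>W - W'\<bar>"
  by (cases e) (simp_all add: line_form_def)

section \<open>Potentials and costs\<close>

definition anchored :: "nat \<Rightarrow> nat \<Rightarrow> int \<Rightarrow> (nat \<Rightarrow> grid_pt) \<Rightarrow> bool" where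
  "anchored n k M r \<longleftrightarrow> (\<forall>s\<in>{1..k}. r s = ((of_int M, s), 0)) \<and>
     (\<forall>i\<in>{1..n}. 0 \<le> snd (r i) \<and> star_dist star_origin (fst (r i)) \<le> of_int M)"

lemma is_potential_iff:
  "is_potential n k E d M r \<longleftrightarrow>
     (\<forall>i j. {i, j} \<in> E \<longrightarrow> grid_gap (r i) (r j) \<le> of_int (2 * d {i, j})) \<and> anchored n k M r"
  unfolding is_potential_def anchored_def grid_gap_def by auto

definition cost :: "nat \<Rightarrow> nat \<Rightarrow> (nat \<Rightarrow> int) \<Rightarrow> (nat \<Rightarrow> grid_pt) \<Rightarrow> real" where
  "cost n k c r = (\<Sum>i\<in>{1..n} - {1..k}. of_int (c i) * snd (r i))"

lemma grid_gap_commute: "grid_gap P Q = grid_gap Q P"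
  unfolding grid_gap_def star_dist_def by auto

lemma edge_endpoints:
  assumes "\<forall>e\<in>E. \<exists>i j. e = {i, j} \<and> i \<in> {1..n} \<and> j \<in> {1..n}" "{i, j} \<in> E"
  shows "i \<in> {1..n}" "j \<in> {1..n}"
  using assms by (metis doubleton_eq_iff)+

lemma h_fun_eq_cost: "is_potential n k E d M r \<Longrightarrow> h_fun n k E c d M r = ereal (cost n k c r)"
  unfolding h_fun_def cost_def by simp

lemma minimizer_is_potential:
  assumes "is_minimizer n k E c d M q" "grid_vec n k r" "is_potential n k E d M r"
  shows "is_potential n k E d M q"
proof (rule ccontr)
  assume "\<not> is_potential n k E d M q"
  then have "h_fun n k E c d M q = \<infinity>" unfolding h_fun_def by simp
  moreover have "h_fun n k E c d M q \<le> h_fun n k E c d M r"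
    using assms(1,2) unfolding is_minimizer_def by blast
  ultimately show False using h_fun_eq_cost[OF assms(3)] by simp
qed

lemma minimizer_exchange:
  assumes p: "is_minimizer n k E c d M p" "is_potential n k E d M p"
    and q: "is_minimizer n k E c d' M q" "is_potential n k E d' M q"
    and p': "grid_vec n k p'" "is_potential n k E d M p'"
    and q': "grid_vec n k q'" "is_potential n k E d' M q'"
    and cost: "cost n k c p' + cost n k c q' = cost n k c p + cost n k c q"
  shows "is_minimizer n k E c d' M q'"
  unfolding is_minimizer_def
proof (intro conjI allI impI)
  fix r assume r: "grid_vec n k r"
  have "h_fun n k E c d M p \<le> h_fun n k E c d M p'"
    using p(1) p'(1) unfolding is_minimizer_def by blast
  then have "cost n k c q' \<le> cost n k c q"
    using cost unfolding h_fun_eq_cost[OF p(2)] h_fun_eq_cost[OF p'(2)] by simp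
  then have "h_fun n k E c d' M q' \<le> h_fun n k E c d' M q"
    unfolding h_fun_eq_cost[OF q(2)] h_fun_eq_cost[OF q'(2)] by simp
  also have "\<dots> \<le> h_fun n k E c d' M r"
    using q(1) r unfolding is_minimizer_def by blast
  finally show "h_fun n k E c d' M q' \<le> h_fun n k E c d' M r" .
qed (fact q'(1))

section \<open>Moving two potentials towards each other\<close>

locale line_frame =
  fixes n k :: nat and A B :: "nat \<Rightarrow> nat"
  assumes k_le_n: "k \<le> n"
    and frame: "\<And>i. i \<in> {1..n} \<Longrightarrow> A i \<noteq> B i \<and> A i \<in> {1..k} \<and> B i \<in> {1..k}"
begin

definition vec :: "(nat \<Rightarrow> int) \<Rightarrow> (nat \<Rightarrow> int) \<Rightarrow> nat \<Rightarrow> grid_pt" where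
  "vec U W i = (if i \<in> {1..n} then line_gpt (A i) (B i) (U i) (W i) else (star_origin, 0))"

definition step_toward ::
    "int \<Rightarrow> (nat \<Rightarrow> int) \<Rightarrow> (nat \<Rightarrow> int) \<Rightarrow> (nat \<Rightarrow> int) \<Rightarrow> (nat \<Rightarrow> int) \<Rightarrow> nat \<Rightarrow> grid_pt"
  where "step_toward l U W U' W' = vec (\<lambda>i. approach l (U i) (U' i)) (\<lambda>i. approach l (W i) (W' i))"

lemma grid_vec_vec: "grid_vec n k (vec U W)"
  unfolding grid_vec_def vec_def using frame in_grid_line_gpt by auto

lemma grid_vec_step_toward: "grid_vec n k (step_toward l U W U' W')"
  unfolding step_toward_def by (rule grid_vec_vec)

lemma grid_norm_vec:
  "i \<in> {1..n} \<Longrightarrow> grid_norm (vec U W i) (vec U' W' i) = of_int (max \<bar>U i - U' i\<bar> \<bar>W i - W' i\<bar>)"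
  unfolding vec_def using frame grid_norm_line_gpt by simp

lemma grid_gap_vec_le_iff:
  assumes "i \<in> {1..n}" "j \<in> {1..n}"
  shows "grid_gap (vec U W i) (vec U W j) \<le> of_int \<beta> \<longleftrightarrow>
    (\<forall>e e'. line_ray (A i) (B i) e \<noteq> line_ray (A j) (B j) e' \<longrightarrow>
       line_form e (U i) (W i) + line_form e' (U j) (W j) \<le> \<beta>)"
  unfolding vec_def using assms frame grid_gap_line_gpt_le_iff by simp

lemma anchored_vec_iff:
  "anchored n k M (vec U W) \<longleftrightarrow> (\<forall>s\<in>{1..k}. vec U W s = ((of_int M, s), 0)) \<and>
     (\<forall>i\<in>{1..n}. W i \<le> U i \<and> \<bar>U i + W i\<bar> \<le> 2 * M)"
proof -
  have "0 \<le> snd (vec U W i) \<longleftrightarrow> W i \<le> U i"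
    "star_dist star_origin (fst (vec U W i)) \<le> of_int M \<longleftrightarrow> \<bar>U i + W i\<bar> \<le> 2 * M"
    if "i \<in> {1..n}" for i
    using that by (auto simp: vec_def line_gpt_def star_dist_origin_line_pt abs_le_iff field_simps)
  then show ?thesis unfolding anchored_def by auto
qed

lemma anchored_step_toward:
  assumes "1 \<le> l" "anchored n k M (vec U W)" "anchored n k M (vec U' W')"
  shows "anchored n k M (step_toward l U W U' W')"
  unfolding anchored_vec_iff step_toward_def
proof (rule conjI; intro ballI)
  fix s assume s: "s \<in> {1..k}"
  then have sn: "s \<in> {1..n}" using k_le_n by auto
  moreover have "vec U W s = vec U' W' s"
    using assms(2,3) s unfolding anchored_vec_iff by simp
  ultimately have "U s = U' s" "W s = W' s"
    unfolding vec_def using frame line_gpt_eq_iff by auto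
  then have "vec (\<lambda>i. approach l (U i) (U' i)) (\<lambda>i. approach l (W i) (W' i)) s = vec U W s"
    unfolding vec_def by (simp add: approach_self[OF assms(1)])
  then show "vec (\<lambda>i. approach l (U i) (U' i)) (\<lambda>i. approach l (W i) (W' i)) s = ((of_int M, s), 0)"
    using assms(2) s unfolding anchored_vec_iff by simp
next
  fix i assume i: "i \<in> {1..n}"
  have "W i + - U i \<le> 0" "W' i + - U' i \<le> 0" "U i + W i \<le> 2 * M" "U' i + W' i \<le> 2 * M"
    "- U i + - W i \<le> 2 * M" "- U' i + - W' i \<le> 2 * M"
    using assms(2,3) i unfolding anchored_vec_iff by (auto simp: abs_le_iff)
  then have "approach l (W i) (W' i) + approach l (- U i) (- U' i) \<le> 0"
    "approach l (U i) (U' i) + approach l (W i) (W' i) \<le> 2 * M"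
    "approach l (- U i) (- U' i) + approach l (- W i) (- W' i) \<le> 2 * M"
    using approach_add_le[OF assms(1)] by presburger+
  then show "approach l (W i) (W' i) \<le> approach l (U i) (U' i) \<and>
      \<bar>approach l (U i) (U' i) + approach l (W i) (W' i)\<bar> \<le> 2 * M"
    unfolding approach_uminus[OF assms(1)] by linarith
qed

lemma grid_gap_step_toward_le:
  assumes "1 \<le> l" "i \<in> {1..n}" "j \<in> {1..n}"
    and "grid_gap (vec U W i) (vec U W j) \<le> of_int \<beta>" "grid_gap (vec U' W' i) (vec U' W' j) \<le> of_int \<beta>"
  shows "grid_gap (step_toward l U W U' W' i) (step_toward l U W U' W' j) \<le> of_int \<beta>"
  unfolding step_toward_def grid_gap_vec_le_iff[OF assms(2,3)] line_form_approach[OF assms(1)]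
proof (intro allI impI)
  fix e e' assume "line_ray (A i) (B i) e \<noteq> line_ray (A j) (B j) e'"
  then have "line_form e (U i) (W i) + line_form e' (U j) (W j) \<le> \<beta>"
    "line_form e (U' i) (W' i) + line_form e' (U' j) (W' j) \<le> \<beta>"
    using assms(4,5) unfolding grid_gap_vec_le_iff[OF assms(2,3)] by auto
  then show "approach l (line_form e (U i) (W i)) (line_form e (U' i) (W' i)) +
      approach l (line_form e' (U j) (W j)) (line_form e' (U' j) (W' j)) \<le> \<beta>"
    by (rule approach_add_le[OF assms(1)])
qed

lemma grid_gap_step_toward_tight:
  assumes "3 \<le> m" "4 \<le> \<beta>" "i \<in> {1..n}" "j \<in> {1..n}"
    and gap: "grid_gap (vec U W i) (vec U W j) \<le> of_int (\<beta> - 2)"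
      "grid_gap (vec U' W' i) (vec U' W' j) \<le> of_int \<beta>"
    and "W i \<le> U i" "W j \<le> U j"
    and "max \<bar>U i - U' i\<bar> \<bar>W i - W' i\<bar> \<le> m" "max \<bar>U j - U' j\<bar> \<bar>W j - W' j\<bar> \<le> m"
  shows "\<exists>l\<in>{1, m}. grid_gap (step_toward l U W U' W' i) (step_toward l U W U' W' j) \<le> of_int (\<beta> - 2)"
proof (rule ccontr)
  let ?F = "\<lambda>e. line_form e (U i) (W i)" and ?F' = "\<lambda>e. line_form e (U' i) (W' i)"
  let ?G = "\<lambda>e. line_form e (U j) (W j)" and ?G' = "\<lambda>e. line_form e (U' j) (W' j)"
  assume "\<not> ?thesis"
  moreover have "1 \<le> m" using assms(1) by simp
  ultimately obtain e1 e1' e2 e2' where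
    rays: "line_ray (A i) (B i) e1 \<noteq> line_ray (A j) (B j) e1'"
      "line_ray (A i) (B i) e2 \<noteq> line_ray (A j) (B j) e2'"
    and fails: "approach 1 (?F e1) (?F' e1) + approach 1 (?G e1') (?G' e1') > \<beta> - 2"
      "approach m (?F e2) (?F' e2) + approach m (?G e2') (?G' e2') > \<beta> - 2"
    unfolding step_toward_def grid_gap_vec_le_iff[OF assms(3,4)]
    by (auto simp: not_le line_form_approach[OF order_refl] line_form_approach[OF \<open>1 \<le> m\<close>])
  show False
  proof (rule approach_steps_not_both_exceed[OF assms(1,2) fails(1) _ _ fails(2)])
    show "?F e1 + ?G e1' \<le> \<beta> - 2" "?F' e1 + ?G' e1' \<le> \<beta>"
      "?F e2 + ?G e2' \<le> \<beta> - 2" "?F' e2 + ?G' e2' \<le> \<beta>"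
      using gap rays unfolding grid_gap_vec_le_iff[OF assms(3,4)] by auto
    show "\<bar>?F e2 - ?F' e2\<bar> \<le> m" "\<bar>?G e2' - ?G' e2'\<bar> \<le> m"
      using assms(9,10) line_form_dist order_trans by blast+
    show "(?F e1 = ?F e2 \<and> ?F' e1 = ?F' e2) \<or> ?F e1 + ?F e2 \<le> 0"
      "(?G e1' = ?G e2' \<and> ?G' e1' = ?G' e2') \<or> ?G e1' + ?G e2' \<le> 0"
      using line_form_pair_cases assms(7,8) by blast+
  qed
qed

lemma sum_grid_norm_step_toward:
  assumes "1 \<le> l" "i0 \<in> {1..n}" "l \<le> max \<bar>U i0 - U' i0\<bar> \<bar>W i0 - W' i0\<bar>"
  shows "(\<Sum>i\<in>{1..n}. grid_norm (vec U' W' i) (step_toward l U W U' W' i))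
    \<le> (\<Sum>i\<in>{1..n}. grid_norm (vec U' W' i) (vec U W i)) - 1"
proof -
  define N where "N i = max \<bar>U i - U' i\<bar> \<bar>W i - W' i\<bar>" for i
  have norm: "grid_norm (vec U' W' i) (vec U W i) = of_int (N i)"
    "grid_norm (vec U' W' i) (step_toward l U W U' W' i) = of_int (if l \<le> N i then N i - 1 else N i)"
    if "i \<in> {1..n}" for i
    using that approach_max_dist[OF assms(1), of "U i" "U' i" "W i" "W' i"]
    unfolding step_toward_def grid_norm_vec[OF that] N_def by (simp_all add: abs_minus_commute max.commute)
  have "(\<Sum>i\<in>{1..n}. grid_norm (vec U' W' i) (step_toward l U W U' W' i))
      = grid_norm (vec U' W' i0) (step_toward l U W U' W' i0)
        + (\<Sum>i\<in>{1..n} - {i0}. grid_norm (vec U' W' i) (step_toward l U W U' W' i))"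
    using assms(2) by (simp add: sum.remove)
  also have "\<dots> \<le> (grid_norm (vec U' W' i0) (vec U W i0) - 1)
        + (\<Sum>i\<in>{1..n} - {i0}. grid_norm (vec U' W' i) (vec U W i))"
    using assms(2,3) norm unfolding N_def by (intro add_mono sum_mono) auto
  also have "\<dots> = (\<Sum>i\<in>{1..n}. grid_norm (vec U' W' i) (vec U W i)) - 1"
    using assms(2) by (simp add: sum.remove)
  finally show ?thesis .
qed

lemma cost_step_toward_swap:
  assumes "1 \<le> l"
  shows "cost n k c (step_toward l U W U' W') + cost n k c (step_toward l U' W' U W)
    = cost n k c (vec U W) + cost n k c (vec U' W')"
proof -
  have "snd (step_toward l U W U' W' i) + snd (step_toward l U' W' U W i) = snd (vec U W i) + snd (vec U' W' i)"
    for i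
  proof -
    have "approach l (U i) (U' i) - approach l (W i) (W' i) + (approach l (U' i) (U i) - approach l (W' i) (W i))
      = U i - W i + (U' i - W' i)"
      using approach_add_swap[OF assms, of "U i" "U' i"] approach_add_swap[OF assms, of "W i" "W' i"] by linarith
    then show ?thesis
      unfolding step_toward_def vec_def line_gpt_def by (simp add: add_divide_distrib[symmetric])
  qed
  then show ?thesis
    unfolding cost_def sum.distrib[symmetric] distrib_left[symmetric] by simp
qed

lemma potential_step_toward:
  assumes "1 \<le> l" "\<forall>e\<in>E. \<exists>i j. e = {i, j} \<and> i \<in> {1..n} \<and> j \<in> {1..n}" "\<forall>e\<in>E. d' e \<le> d e"
    and "is_potential n k E d M (vec U W)" "is_potential n k E d' M (vec U' W')"
  shows "is_potential n k E d M (step_toward l U W U' W')"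
  unfolding is_potential_iff
proof (intro conjI allI impI)
  fix i j assume ij: "{i, j} \<in> E"
  have "grid_gap (vec U' W' i) (vec U' W' j) \<le> of_int (2 * d {i, j})"
    using assms(3,5) ij unfolding is_potential_iff by (smt (verit) of_int_le_iff)
  then show "grid_gap (step_toward l U W U' W' i) (step_toward l U W U' W' j) \<le> of_int (2 * d {i, j})"
    using grid_gap_step_toward_le[OF assms(1) edge_endpoints[OF assms(2) ij]] assms(4) ij
    unfolding is_potential_iff by blast
qed (use anchored_step_toward assms(1,4,5) is_potential_iff in blast)

lemma potential_step_toward_lowered_edge:
  assumes "1 \<le> l" and edges: "\<forall>e\<in>E. \<exists>i j. e = {i, j} \<and> i \<in> {1..n} \<and> j \<in> {1..n}"
    and "e0 = {a, b}"
    and pot: "is_potential n k E (d(e0 := d e0 - 1)) M (vec U W)" "is_potential n k E d M (vec U' W')"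
    and gap: "grid_gap (step_toward l U W U' W' a) (step_toward l U W U' W' b) \<le> of_int (2 * d e0 - 2)"
  shows "is_potential n k E (d(e0 := d e0 - 1)) M (step_toward l U W U' W')"
  unfolding is_potential_iff
proof (intro conjI allI impI)
  let ?d1 = "d(e0 := d e0 - 1)"
  fix i j assume ij: "{i, j} \<in> E"
  show "grid_gap (step_toward l U W U' W' i) (step_toward l U W U' W' j) \<le> of_int (2 * ?d1 {i, j})"
  proof (cases "{i, j} = e0")
    case True
    then have "(i = a \<and> j = b) \<or> (i = b \<and> j = a)" using assms(3) by (metis doubleton_eq_iff)
    moreover have "grid_gap (step_toward l U W U' W' a) (step_toward l U W U' W' b) \<le> of_int (2 * ?d1 {i, j})"
      using gap True by simp
    ultimately show ?thesis by (metis grid_gap_commute)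
  next
    case False
    then have d1_eq: "?d1 {i, j} = d {i, j}" by simp
    have "grid_gap (vec U W i) (vec U W j) \<le> of_int (2 * d {i, j})"
      using pot(1) ij unfolding is_potential_iff d1_eq[symmetric] by blast
    moreover have "grid_gap (vec U' W' i) (vec U' W' j) \<le> of_int (2 * d {i, j})"
      using pot(2) ij unfolding is_potential_iff by blast
    ultimately show ?thesis
      unfolding d1_eq by (rule grid_gap_step_toward_le[OF assms(1) edge_endpoints[OF edges ij]])
  qed
qed (use anchored_step_toward[OF assms(1)] pot is_potential_iff in blast)

lemma exchange_step:
  fixes d :: "nat set \<Rightarrow> int"
  assumes edges: "\<forall>e\<in>E. \<exists>i j. e = {i, j} \<and> i \<in> {1..n} \<and> j \<in> {1..n}"
    and e0: "e0 \<in> E" "0 < d e0" "even (d e0)"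
    and p: "is_minimizer n k E c d M (vec UP WP)" "is_potential n k E d M (vec UP WP)"
    and q: "is_minimizer n k E c (d(e0 := d e0 - 1)) M (vec UQ WQ)"
      "is_potential n k E (d(e0 := d e0 - 1)) M (vec UQ WQ)"
    and i0: "i0 \<in> {1..n}" "3 \<le> max \<bar>UQ i0 - UP i0\<bar> \<bar>WQ i0 - WP i0\<bar>"
    and far: "\<forall>i\<in>{1..n}. max \<bar>UQ i - UP i\<bar> \<bar>WQ i - WP i\<bar> \<le> max \<bar>UQ i0 - UP i0\<bar> \<bar>WQ i0 - WP i0\<bar>"
  shows "\<exists>q'. is_minimizer n k E c (d(e0 := d e0 - 1)) M q' \<and>
    (\<Sum>i\<in>{1..n}. grid_norm (vec UP WP i) (q' i)) \<le> (\<Sum>i\<in>{1..n}. grid_norm (vec UP WP i) (vec UQ WQ i)) - 1"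
proof -
  define d1 where "d1 = d(e0 := d e0 - 1)"
  define m where "m = max \<bar>UQ i0 - UP i0\<bar> \<bar>WQ i0 - WP i0\<bar>"
  obtain a b where ab: "e0 = {a, b}" "a \<in> {1..n}" "b \<in> {1..n}" using edges e0(1) by blast
  have "2 \<le> d e0" using e0(2,3) by presburger
  then have "4 \<le> 2 * d e0" by simp
  moreover have "grid_gap (vec UQ WQ a) (vec UQ WQ b) \<le> of_int (2 * d1 {a, b})"
    "grid_gap (vec UP WP a) (vec UP WP b) \<le> of_int (2 * d {a, b})"
    using p(2) q(2) e0(1) unfolding is_potential_iff ab(1) d1_def by blast+
  then have "grid_gap (vec UQ WQ a) (vec UQ WQ b) \<le> of_int (2 * d e0 - 2)"
    "grid_gap (vec UP WP a) (vec UP WP b) \<le> of_int (2 * d e0)"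
    unfolding d1_def ab(1) by simp_all
  moreover have "WQ a \<le> UQ a" "WQ b \<le> UQ b"
    using q(2) ab(2,3) unfolding is_potential_iff anchored_vec_iff by auto
  ultimately obtain l where l: "l \<in> {1, m}"
    "grid_gap (step_toward l UQ WQ UP WP a) (step_toward l UQ WQ UP WP b) \<le> of_int (2 * d e0 - 2)"
    using grid_gap_step_toward_tight[of m "2 * d e0" a b UQ WQ UP WP] i0 far ab(2,3)
    unfolding m_def by auto
  have l1: "1 \<le> l" and lm: "l \<le> m" using l(1) i0(2) unfolding m_def by auto
  have "\<forall>e\<in>E. d1 e \<le> d e" unfolding d1_def by simp
  then have p': "is_potential n k E d M (step_toward l UP WP UQ WQ)"
    using potential_step_toward[OF l1 edges] p(2) q(2) unfolding d1_def by blast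
  have q': "is_potential n k E d1 M (step_toward l UQ WQ UP WP)"
    using potential_step_toward_lowered_edge[OF l1 edges ab(1) q(2) p(2) l(2)] unfolding d1_def .
  have "is_minimizer n k E c d1 M (step_toward l UQ WQ UP WP)"
    using minimizer_exchange[OF p q[folded d1_def] grid_vec_step_toward p' grid_vec_step_toward q']
      cost_step_toward_swap[OF l1] by (simp add: add.commute)
  moreover have "(\<Sum>i\<in>{1..n}. grid_norm (vec UP WP i) (step_toward l UQ WQ UP WP i))
      \<le> (\<Sum>i\<in>{1..n}. grid_norm (vec UP WP i) (vec UQ WQ i)) - 1"
    using sum_grid_norm_step_toward[OF l1 i0(1)] lm unfolding m_def by blast
  ultimately show ?thesis unfolding d1_def by blast
qed

end

section \<open>Existence of minimizers\<close>

lemma exists_potential: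
  assumes "1 \<le> k" "k \<le> n" "0 < M"
    and edges: "\<forall>e\<in>E. \<exists>i j. e = {i, j} \<and> i \<in> {1..n} \<and> j \<in> {1..n}"
    and no_term_edge: "\<forall>e\<in>E. \<not> e \<subseteq> {1..k}"
    and "\<forall>e\<in>E. 0 \<le> d e"
  shows "\<exists>r. grid_vec n k r \<and> is_potential n k E d M r"
proof -
  define r :: "nat \<Rightarrow> grid_pt" where "r i = (if i \<in> {1..k} then ((of_int M, i), 0)
     else if i \<in> {1..n} then (star_origin, of_int M) else (star_origin, 0))" for i
  have dist: "star_dist (of_int M, s) star_origin = of_int M"
    "star_dist star_origin (of_int M, s) = of_int M" "star_dist star_origin star_origin = 0" for s
    using assms(3) unfolding star_dist_def star_origin_def by auto
  have "in_grid k (r i)" if "i \<in> {1..n}" for i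
  proof (cases "i \<in> {1..k}")
    case True
    then show ?thesis using assms(3) by (simp add: r_def in_grid_iff in_star_def)
  next
    case False
    then show ?thesis using assms(1) that by (simp add: r_def star_origin_def in_grid_iff in_star_def)
  qed
  then have "grid_vec n k r" using assms(2) unfolding grid_vec_def r_def by auto
  moreover have "is_potential n k E d M r"
    unfolding is_potential_iff
  proof (intro conjI allI impI)
    fix i j assume ij: "{i, j} \<in> E"
    then have "i \<in> {1..n}" "j \<in> {1..n}" "i \<notin> {1..k} \<or> j \<notin> {1..k}"
      using no_term_edge edge_endpoints[OF edges] by auto
    then have "grid_gap (r i) (r j) \<le> 0"
      unfolding grid_gap_def r_def using assms(3) by (auto simp: dist)
    moreover have "0 \<le> d {i, j}" using assms(6) ij by blast
    ultimately show "grid_gap (r i) (r j) \<le> of_int (2 * d {i, j})" by simp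
  next
    show "anchored n k M r" using assms(2,3) dist unfolding anchored_def r_def by auto
  qed
  ultimately show ?thesis by blast
qed

lemma in_grid_double_snd:
  assumes "in_grid k P"
  shows "2 * snd P \<in> \<int>"
proof -
  obtain r s y where P: "P = ((r, s), y)" by (metis prod.collapse)
  then have "(r + y) - (r - y) \<in> \<int>" using assms in_grid_iff Ints_diff by blast
  moreover have "(r + y) - (r - y) = 2 * y" by simp
  ultimately show ?thesis using P by simp
qed

lemma exists_minimizer:
  assumes "grid_vec n k r0" "is_potential n k E d M r0" "\<forall>i\<in>{1..n} - {1..k}. 0 \<le> c i"
  shows "\<exists>q. is_minimizer n k E c d M q"
proof -
  define P where "P r \<longleftrightarrow> grid_vec n k r \<and> is_potential n k E d M r" for r
  define f where "f r = nat \<lfloor>2 * cost n k c r\<rfloor>" for r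
  have f: "of_nat (f r) = 2 * cost n k c r" if "P r" for r
  proof -
    have "2 * cost n k c r = (\<Sum>i\<in>{1..n} - {1..k}. of_int (c i) * (2 * snd (r i)))"
      unfolding cost_def by (simp add: sum_distrib_left mult.left_commute)
    also have "\<dots> \<in> \<int>"
      using that unfolding P_def grid_vec_def
      by (intro Ints_sum Ints_mult[OF Ints_of_int] in_grid_double_snd) auto
    finally obtain z :: int where z: "2 * cost n k c r = of_int z" by (metis Ints_cases)
    moreover have "0 \<le> cost n k c r"
      using that assms(3) unfolding P_def is_potential_def cost_def by (intro sum_nonneg) auto
    ultimately show ?thesis unfolding f_def by simp
  qed
  obtain q where q: "P q" "\<And>r. P r \<Longrightarrow> f q \<le> f r"
    using ex_has_least_nat[of P r0 f] assms(1,2) unfolding P_def by blast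
  have "is_minimizer n k E c d M q"
    unfolding is_minimizer_def
  proof (intro conjI allI impI)
    fix r assume r: "grid_vec n k r"
    show "h_fun n k E c d M q \<le> h_fun n k E c d M r"
    proof (cases "is_potential n k E d M r")
      case True
      then have "cost n k c q \<le> cost n k c r"
        using q f[of q] f[of r] r unfolding P_def by (smt (verit) of_nat_le_iff)
      then show ?thesis using True q(1) h_fun_eq_cost unfolding P_def by simp
    qed (simp add: h_fun_def)
  qed (use q(1) P_def in blast)
  then show ?thesis by blast
qed

section \<open>Descent to a nearby minimizer\<close>

lemma grid_norm_nonneg: "in_grid k P \<Longrightarrow> in_grid k Q \<Longrightarrow> 0 \<le> grid_norm P Q"
  unfolding in_grid_def in_star_def grid_norm_def star_dist_def by auto

lemma exists_by_descent:
  fixes \<Phi> :: "'a \<Rightarrow> real"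
  assumes "P x" "\<And>x. P x \<Longrightarrow> 0 \<le> \<Phi> x" "\<And>x. P x \<Longrightarrow> \<not> Q x \<Longrightarrow> \<exists>y. P y \<and> \<Phi> y \<le> \<Phi> x - 1"
  shows "\<exists>x. P x \<and> Q x"
  using assms(1)
proof (induction "nat \<lceil>\<Phi> x\<rceil>" arbitrary: x rule: less_induct)
  case less
  show ?case
  proof (cases "Q x")
    case False
    then obtain y where "P y" "\<Phi> y \<le> \<Phi> x - 1" using assms(3) less.prems by blast
    moreover have "0 \<le> \<lceil>\<Phi> y\<rceil>" "\<lceil>\<Phi> y\<rceil> \<le> \<lceil>\<Phi> x\<rceil> - 1"
      using assms(2)[OF \<open>P y\<close>] ceiling_mono[OF \<open>\<Phi> y \<le> \<Phi> x - 1\<close>] by simp_all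
    ultimately show ?thesis using less.hyps by (metis nat_less_eq_zless zle_diff1_eq)
  qed (use less.prems in blast)
qed

lemma grid_vec_common_frame:
  assumes "2 \<le> k" "k \<le> n" "grid_vec n k p" "grid_vec n k q"
  shows "\<exists>A B U W U' W'. line_frame n k A B \<and> p = line_frame.vec n A B U W \<and> q = line_frame.vec n A B U' W'"
proof -
  have "\<forall>i\<in>{1..n}. \<exists>a b U W U' W'. a \<noteq> b \<and> a \<in> {1..k} \<and> b \<in> {1..k} \<and>
      p i = line_gpt a b U W \<and> q i = line_gpt a b U' W'"
    using common_line_gpt[OF assms(1)] assms(3,4) unfolding grid_vec_def by (metis prod.collapse)
  then obtain A B U W U' W' where coords: "\<forall>i\<in>{1..n}. A i \<noteq> B i \<and> A i \<in> {1..k} \<and> B i \<in> {1..k} \<and>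
      p i = line_gpt (A i) (B i) (U i) (W i) \<and> q i = line_gpt (A i) (B i) (U' i) (W' i)"
    by metis
  then have frame: "line_frame n k A B" using assms(2) by unfold_locales auto
  have "p = line_frame.vec n A B U W" "q = line_frame.vec n A B U' W'"
    using coords assms(3,4) unfolding grid_vec_def by (auto intro!: ext simp: line_frame.vec_def[OF frame])
  with frame show ?thesis by blast
qed

lemma exists_closer_minimizer:
  fixes d :: "nat set \<Rightarrow> int"
  assumes "2 \<le> k" "k \<le> n"
    and edges: "\<forall>e\<in>E. \<exists>i j. e = {i, j} \<and> i \<in> {1..n} \<and> j \<in> {1..n}"
    and e0: "e0 \<in> E" "0 < d e0" "even (d e0)"
    and p: "is_minimizer n k E c d M p" "is_potential n k E d M p"
    and q: "is_minimizer n k E c (d(e0 := d e0 - 1)) M q" "is_potential n k E (d(e0 := d e0 - 1)) M q"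
    and far: "2 < vec_norm n p q"
  shows "\<exists>q'. is_minimizer n k E c (d(e0 := d e0 - 1)) M q' \<and>
    (\<Sum>i\<in>{1..n}. grid_norm (p i) (q' i)) \<le> (\<Sum>i\<in>{1..n}. grid_norm (p i) (q i)) - 1"
proof -
  obtain A B UP WP UQ WQ where "line_frame n k A B"
    and pq: "p = line_frame.vec n A B UP WP" "q = line_frame.vec n A B UQ WQ"
    using grid_vec_common_frame[OF assms(1,2)] p(1) q(1) unfolding is_minimizer_def by metis
  then interpret line_frame n k A B by simp
  define N where "N i = max \<bar>UQ i - UP i\<bar> \<bar>WQ i - WP i\<bar>" for i
  have norm: "grid_norm (p i) (q i) = of_int (N i)" if "i \<in> {1..n}" for i
    unfolding pq grid_norm_vec[OF that] N_def by (simp add: abs_minus_commute)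
  have fin: "finite ((\<lambda>i. grid_norm (p i) (q i)) ` {1..n})" "(\<lambda>i. grid_norm (p i) (q i)) ` {1..n} \<noteq> {}"
    using assms(1,2) by auto
  obtain i0 where i0: "i0 \<in> {1..n}" "vec_norm n p q = grid_norm (p i0) (q i0)"
    using Max_in[OF fin] unfolding vec_norm_def by auto
  have "N i \<le> N i0" if "i \<in> {1..n}" for i
    using Max_ge[OF fin(1)] that norm i0 unfolding vec_norm_def by fastforce
  moreover have "3 \<le> N i0" using far i0 norm by fastforce
  ultimately show ?thesis
    using exchange_step[OF edges e0 p[unfolded pq] q[unfolded pq] i0(1)] unfolding pq N_def by blast
qed

theorem theorem3p12:
  fixes n k :: nat and E :: "nat set set" and c :: "nat \<Rightarrow> int" and d :: "nat set \<Rightarrow> int"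
    and M :: int and e0 :: "nat set" and p :: "nat \<Rightarrow> grid_pt"
  assumes k3: "3 \<le> k" and kn: "k \<le> n"
    and E_simple: "\<forall>e\<in>E. \<exists>i j. e = {i, j} \<and> i \<noteq> j \<and> i \<in> {1..n} \<and> j \<in> {1..n}"
    and no_term_edge: "\<forall>e\<in>E. \<not> e \<subseteq> {1..k}"
    and c_nonneg: "\<forall>i\<in>{1..n} - {1..k}. c i \<ge> 0"
    and d_pos: "\<forall>e\<in>E. d e > 0"
    and M_pos: "M > 0"
    and e0E: "e0 \<in> E" and e0_even: "even (d e0)"
    and p_min: "is_minimizer n k E c d M p"
  shows "\<exists>q. is_minimizer n k E c (d(e0 := d e0 - 1)) M q \<and> vec_norm n p q \<le> 2"
proof -
  let ?d1 = "d(e0 := d e0 - 1)"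
  let ?\<Phi> = "\<lambda>q. \<Sum>i\<in>{1..n}. grid_norm (p i) (q i)"
  have k1: "1 \<le> k" and k2: "2 \<le> k" using k3 by simp_all
  have edges: "\<forall>e\<in>E. \<exists>i j. e = {i, j} \<and> i \<in> {1..n} \<and> j \<in> {1..n}" using E_simple by blast
  have d0: "0 < d e0" using d_pos e0E by blast
  with e0_even have "2 \<le> d e0" by presburger
  then have "\<forall>e\<in>E. 0 \<le> d e" "\<forall>e\<in>E. 0 \<le> ?d1 e" using d_pos by fastforce+
  then obtain r r1 where r: "grid_vec n k r" "is_potential n k E d M r"
    and r1: "grid_vec n k r1" "is_potential n k E ?d1 M r1"
    using exists_potential[OF k1 kn M_pos edges no_term_edge] by meson
  have p_pot: "is_potential n k E d M p" using minimizer_is_potential[OF p_min r] .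
  obtain q0 where q0: "is_minimizer n k E c ?d1 M q0" using exists_minimizer[OF r1 c_nonneg] by blast
  have "0 \<le> ?\<Phi> q" if "is_minimizer n k E c ?d1 M q" for q
    using that p_min unfolding is_minimizer_def grid_vec_def by (auto intro!: sum_nonneg grid_norm_nonneg)
  moreover have "\<exists>q'. is_minimizer n k E c ?d1 M q' \<and> ?\<Phi> q' \<le> ?\<Phi> q - 1"
    if "is_minimizer n k E c ?d1 M q" "\<not> vec_norm n p q \<le> 2" for q
    using exists_closer_minimizer[OF k2 kn edges e0E d0 e0_even p_min p_pot that(1)
        minimizer_is_potential[OF that(1) r1] that(2)[unfolded not_le]] .
  ultimately show ?thesis
    by (rule exists_by_descent[of "is_minimizer n k E c ?d1 M", OF q0, where Q = "\<lambda>q. vec_norm n p q \<le> 2"])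
qed

end
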